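(* Let $p$ be a prime and let $b$ be an integer with $0<b\le b^{-1}<p$. Let $G$ act on $S=\mathbb{C}[x_1,x_2]$ via $x_1\mapsto\zeta x_1$, $x_2\mapsto\zeta^b x_2$. The following are equivalent: (1) $S^G_{1,b}$ is generated by 4 invariants, i.e. $|\mathrm{inv}_{1,b}|=4$ (equivalently $\operatorname{codim}\ker\varphi_{1,b}=2$); (2) $(p-b)(p-b^{-1})=p+1$.
   Context: Here $\zeta=e^{2\pi i/p}$ and $G=\mathbb{Z}/p\mathbb{Z}=\langle\zeta\rangle$; $S^G_{1,b}$ is the invariant ring, spanned by the monomials $x_1^cx_2^d$ with $c+bd\equiv0\pmod p$. $b^{-1}$ is the unique integer $0<b^{-1}<p$ with $bb^{-1}\equiv1\pmod p$. $\mathrm{inv}_{1,b}$ denotes the minimal set of monomial generators of $S^G_{1,b}$ as a $\mathbb{C}$-algebra: the nonconstant invariant monomials that are not a product of two nonconstant invariant monomials. Writing $\mathrm{inv}_{1,b}=\{z_0,\dots,z_n\}$ in lexicographic order with $x_1>x_2$, let $R=\mathbb{C}[y_0,\dots,y_n]$ with $\deg y_i=\deg z_i$ and $\varphi_{1,b}:R\to S^G_{1,b}$ the $\mathbb{C}$-algebra map $y_i\mapsto z_i$. *)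

theory Defs
  imports "HOL-Computational_Algebra.Primes" "HOL-Number_Theory.Cong"
begin

text \<open>A monomial x1^c x2^d of C[x1,x2] is represented by its exponent vector (c,d).
  It is invariant under the action x1 -> zeta x1, x2 -> zeta^b x2 of Z/pZ iff
  c + b d = 0 (mod p).\<close>

definition invariant_mon :: "nat \<Rightarrow> nat \<Rightarrow> nat \<times> nat \<Rightarrow> bool" where
  "invariant_mon p b m = ([fst m + b * snd m = 0] (mod p))"

definition nonconst_inv :: "nat \<Rightarrow> nat \<Rightarrow> nat \<times> nat \<Rightarrow> bool" where
  "nonconst_inv p b m = (m \<noteq> (0,0) \<and> invariant_mon p b m)"

text \<open>inv_{1,b}: nonconstant invariant monomials that are not a product of two
  nonconstant invariant monomials (product of monomials = sum of exponent vectors).\<close>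

definition inv_gens :: "nat \<Rightarrow> nat \<Rightarrow> (nat \<times> nat) set" where
  "inv_gens p b = {m. nonconst_inv p b m \<and>
      \<not> (\<exists>m1 m2. nonconst_inv p b m1 \<and> nonconst_inv p b m2 \<and>
                 m = (fst m1 + fst m2, snd m1 + snd m2))}"

end

theory Submission
  imports Defs
begin

text \<open>Put u = p - b and v = p - b^{-1}, so that u v = 1 (mod p) and x1^c x2^d is invariant
  iff d = c v (mod p). The monomials x1^p, x2^p, x1^u x2 and x1 x2^v are always minimal
  generators, and every other minimal generator lies in the window 0 < c < u, 0 < d < v.
  If u v = p + 1 the window holds no invariant: there c v < p, so d = c v, contradicting d < v.
  Otherwise either u = v = 1 and there are only three generators, or u v > 2 p and
  c = p div v + 1, d = c v - p is an invariant in the window, which lies above a fifth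
  generator.\<close>

definition mon_dvd :: "nat \<times> nat \<Rightarrow> nat \<times> nat \<Rightarrow> bool" where
  "mon_dvd m n \<longleftrightarrow> fst m \<le> fst n \<and> snd m \<le> snd n"

lemma invariant_mon_add_cancel:
  assumes "invariant_mon p b (a1, a2)"
  shows "invariant_mon p b (a1 + c1, a2 + c2) \<longleftrightarrow> invariant_mon p b (c1, c2)"
proof -
  have "a1 + c1 + b * (a2 + c2) = (a1 + b * a2) + (c1 + b * c2)"
    by (simp add: algebra_simps)
  moreover have "[a1 + b * a2 = 0] (mod p)"
    using assms by (simp add: invariant_mon_def)
  ultimately show ?thesis
    unfolding invariant_mon_def prod.sel
    by (metis cong_add_rcancel_0_nat cong_add_lcancel_0_nat add_0 cong_trans cong_sym)
qed

lemma inv_gens_iff_minimal: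
  "m \<in> inv_gens p b \<longleftrightarrow>
     nonconst_inv p b m \<and> (\<forall>X. nonconst_inv p b X \<and> mon_dvd X m \<longrightarrow> X = m)"
proof
  assume m: "m \<in> inv_gens p b"
  have "X = m" if X: "nonconst_inv p b X" "mon_dvd X m" for X
  proof (rule ccontr)
    assume "X \<noteq> m"
    define Y where "Y = (fst m - fst X, snd m - snd X)"
    have m_sum: "m = (fst X + fst Y, snd X + snd Y)"
      using X(2) by (simp add: Y_def mon_dvd_def prod_eq_iff)
    have "invariant_mon p b Y"
      using m X m_sum invariant_mon_add_cancel[of p b "fst X" "snd X" "fst Y" "snd Y"]
      by (simp add: inv_gens_def nonconst_inv_def)
    moreover have "Y \<noteq> (0, 0)"
      using \<open>X \<noteq> m\<close> m_sum by auto
    ultimately show False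
      using m X(1) m_sum unfolding inv_gens_def nonconst_inv_def by blast
  qed
  with m show "nonconst_inv p b m \<and> (\<forall>X. nonconst_inv p b X \<and> mon_dvd X m \<longrightarrow> X = m)"
    by (simp add: inv_gens_def)
next
  assume m: "nonconst_inv p b m \<and> (\<forall>X. nonconst_inv p b X \<and> mon_dvd X m \<longrightarrow> X = m)"
  have "\<not> (nonconst_inv p b m1 \<and> nonconst_inv p b m2 \<and> m = (fst m1 + fst m2, snd m1 + snd m2))"
    for m1 m2
  proof
    assume sum: "nonconst_inv p b m1 \<and> nonconst_inv p b m2 \<and> m = (fst m1 + fst m2, snd m1 + snd m2)"
    then have "mon_dvd m1 m"
      by (simp add: mon_dvd_def)
    then have "m1 = m"
      using m sum by blast
    with sum show False
      by (auto simp: nonconst_inv_def prod_eq_iff)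
  qed
  with m show "m \<in> inv_gens p b"
    unfolding inv_gens_def by blast
qed

lemma ex_inv_gens_mon_dvd:
  assumes "nonconst_inv p b m"
  shows "\<exists>g \<in> inv_gens p b. mon_dvd g m"
proof -
  define P where "P X \<longleftrightarrow> nonconst_inv p b X \<and> mon_dvd X m" for X
  have "P m"
    using assms by (simp add: P_def mon_dvd_def)
  then obtain g where g: "P g" and least: "\<And>X. P X \<Longrightarrow> fst g + snd g \<le> fst X + snd X"
    using ex_has_least_nat[of P m "\<lambda>X. fst X + snd X"] by blast
  have "X = g" if "nonconst_inv p b X" "mon_dvd X g" for X
    using that g least[of X] by (auto simp: P_def mon_dvd_def prod_eq_iff)
  with g have "g \<in> inv_gens p b"
    by (simp add: inv_gens_iff_minimal P_def)
  with g show ?thesis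
    by (auto simp: P_def)
qed

lemma finite_inv_gens:
  assumes "0 < p"
  shows "finite (inv_gens p b)"
proof (rule finite_subset)
  have "nonconst_inv p b (p, 0)" "nonconst_inv p b (0, p)"
    using assms by (simp_all add: nonconst_inv_def invariant_mon_def cong_0_iff)
  then show "inv_gens p b \<subseteq> {..p} \<times> {..p}"
    by (force simp: inv_gens_iff_minimal mon_dvd_def)
qed simp

lemma cong_0_le_imp_eq:
  fixes x p :: nat
  assumes "[x = 0] (mod p)" "0 < x" "x \<le> p"
  shows "x = p"
  using assms by (auto simp: cong_0_iff dest: dvd_imp_le)

lemma cong_mult_unit_swap:
  fixes c d u v p :: nat
  assumes "[u * v = 1] (mod p)"
  shows "[d = c * v] (mod p) \<longleftrightarrow> [c = d * u] (mod p)"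
proof
  assume "[d = c * v] (mod p)"
  then have "[d * u = c * (u * v)] (mod p)"
    by (metis cong_scalar_right mult.assoc mult.commute)
  also have "[c * (u * v) = c] (mod p)"
    using assms by (metis cong_scalar_left mult_1_right)
  finally show "[c = d * u] (mod p)"
    by (rule cong_sym)
next
  assume "[c = d * u] (mod p)"
  then have "[c * v = d * (u * v)] (mod p)"
    by (metis cong_scalar_right mult.assoc)
  also have "[d * (u * v) = d] (mod p)"
    using assms by (metis cong_scalar_left mult_1_right)
  finally show "[d = c * v] (mod p)"
    by (rule cong_sym)
qed

lemma cong_mult_minimal_solution:
  fixes c d w p :: nat
  assumes "[d = c * w] (mod p)" "w < p" "c \<le> 1" "d \<le> w" "(c, d) \<noteq> (0, 0)"
  shows "(c, d) = (1, w)"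
proof (cases "c = 0")
  case True
  then have "d = 0"
    using assms(1,2,4) cong_less_modulus_unique_nat[of d 0 p] by simp
  with True assms(5) show ?thesis
    by simp
next
  case False
  with assms(3) have "c = 1"
    by simp
  then have "d = w"
    using assms(1,2,4) cong_less_modulus_unique_nat[of d w p] by simp
  with False assms(3) show ?thesis
    by simp
qed

locale cyclic_invariants =
  fixes p b binv :: nat
  assumes p_gt_1: "1 < p"
    and b_less: "b < p" and binv_less: "binv < p"
    and inverse: "[b * binv = 1] (mod p)"
begin

definition u :: nat where "u = p - b"
definition v :: nat where "v = p - binv"

lemma b_pos: "0 < b" and binv_pos: "0 < binv"
  using inverse p_gt_1 by (auto intro!: Nat.gr0I simp: cong_def)

lemma u_pos: "0 < u" and u_less: "u < p" and v_pos: "0 < v" and v_less: "v < p"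
  using b_pos binv_pos b_less binv_less by (simp_all add: u_def v_def)

lemma uv_cong_1: "[u * v = 1] (mod p)"
proof -
  have "int u * int v = int b * int binv + int p * (int p - int b - int binv)"
    using b_less binv_less by (simp add: u_def v_def of_nat_diff algebra_simps)
  then have "[int u * int v = int b * int binv] (mod int p)"
    by (simp add: cong_iff_dvd_diff)
  also have "[int b * int binv = 1] (mod int p)"
    using inverse by (metis cong_int_iff of_nat_1 of_nat_mult)
  finally show ?thesis
    by (metis cong_int_iff of_nat_1 of_nat_mult)
qed

lemma invariant_mon_iff_cong_v: "invariant_mon p b (c, d) \<longleftrightarrow> [d = c * v] (mod p)"
proof -
  define k where "k = int b * int binv - 1"
  have "int p dvd k"
    using inverse unfolding k_def
    by (metis cong_int_iff cong_iff_dvd_diff of_nat_1 of_nat_mult)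
  then have k_multiple: "int p dvd x + k * y \<longleftrightarrow> int p dvd x" for x y
    by (simp add: dvd_add_left_iff)
  have "invariant_mon p b (c, d) \<longleftrightarrow> int p dvd int c + int b * int d"
    unfolding invariant_mon_def cong_0_iff by (metis fst_conv snd_conv of_nat_dvd_iff of_nat_add of_nat_mult)
  also have "\<dots> \<longleftrightarrow> int p dvd int binv * int c + int d"
  proof -
    have "int binv * (int c + int b * int d) = (int binv * int c + int d) + k * int d"
      and "int b * (int binv * int c + int d) = (int c + int b * int d) + k * int c"
      by (simp_all add: k_def algebra_simps)
    then show ?thesis
      using k_multiple by (metis dvd_mult)
  qed
  also have "\<dots> \<longleftrightarrow> int p dvd int d - int c * int v"
  proof -
    have "int d - int c * int v = (int binv * int c + int d) - int p * int c"
      using binv_less by (simp add: v_def of_nat_diff algebra_simps)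
    then show ?thesis
      by (metis dvd_diff_left_iff dvd_triv_left)
  qed
  also have "\<dots> \<longleftrightarrow> [d = c * v] (mod p)"
    by (metis cong_iff_dvd_diff cong_int_iff of_nat_mult)
  finally show ?thesis .
qed

lemma invariant_mon_iff_cong_u: "invariant_mon p b (c, d) \<longleftrightarrow> [c = d * u] (mod p)"
  using invariant_mon_iff_cong_v cong_mult_unit_swap[OF uv_cong_1] by simp

definition corner_gens :: "(nat \<times> nat) set" where
  "corner_gens = {(p, 0), (0, p), (u, 1), (1, v)}"

lemma corner_gens_subset: "corner_gens \<subseteq> inv_gens p b"
proof -
  have "(p, 0) \<in> inv_gens p b"
    unfolding inv_gens_iff_minimal using p_gt_1
    by (auto simp: nonconst_inv_def invariant_mon_iff_cong_u mon_dvd_def cong_0_iff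
      intro: cong_0_le_imp_eq)
  moreover have "(0, p) \<in> inv_gens p b"
    unfolding inv_gens_iff_minimal using p_gt_1
    by (auto simp: nonconst_inv_def invariant_mon_iff_cong_v mon_dvd_def cong_0_iff
      intro: cong_0_le_imp_eq)
  moreover have "(u, 1) \<in> inv_gens p b"
    unfolding inv_gens_iff_minimal
    using cong_mult_minimal_solution[of c d u p for c d] u_less
    by (auto simp: nonconst_inv_def invariant_mon_iff_cong_u mon_dvd_def)
  moreover have "(1, v) \<in> inv_gens p b"
    unfolding inv_gens_iff_minimal
    using cong_mult_minimal_solution[of d c v p for c d] v_less
    by (auto simp: nonconst_inv_def invariant_mon_iff_cong_v mon_dvd_def)
  ultimately show ?thesis
    by (simp add: corner_gens_def)
qed

definition window :: "(nat \<times> nat) set" where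
  "window = {0<..<u} \<times> {0<..<v}"

lemma corner_dvd_or_window:
  assumes "nonconst_inv p b (c, d)"
  shows "(\<exists>g \<in> corner_gens. mon_dvd g (c, d)) \<or> (c, d) \<in> window"
proof -
  have "(c, d) \<noteq> (0, 0)" "invariant_mon p b (c, d)"
    using assms by (simp_all add: nonconst_inv_def)
  then have "[d = c * v] (mod p)" "[c = d * u] (mod p)" "(c, d) \<noteq> (0, 0)"
    by (simp_all add: invariant_mon_iff_cong_v[symmetric] invariant_mon_iff_cong_u[symmetric])
  then consider "c = 0" "p \<le> d" | "d = 0" "p \<le> c" | "0 < c" "0 < d"
    by (metis cong_0_iff dvd_imp_le mult_0 neq0_conv prod.inject)
  then show ?thesis
    by cases (force simp: corner_gens_def mon_dvd_def window_def)+
qed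

lemma inv_gens_subset: "inv_gens p b \<subseteq> corner_gens \<union> window"
proof
  fix m
  assume "m \<in> inv_gens p b"
  then have m: "nonconst_inv p b m" "\<And>X. nonconst_inv p b X \<Longrightarrow> mon_dvd X m \<Longrightarrow> X = m"
    unfolding inv_gens_iff_minimal by blast+
  have corner: "nonconst_inv p b g" if "g \<in> corner_gens" for g
    using that corner_gens_subset by (auto simp: inv_gens_def)
  have "(\<exists>g \<in> corner_gens. mon_dvd g m) \<or> m \<in> window"
    using corner_dvd_or_window[of "fst m" "snd m"] m(1) by simp
  then show "m \<in> corner_gens \<union> window"
    using corner m(2) by blast
qed

lemma u_eq_1_iff_v_eq_1: "u = 1 \<longleftrightarrow> v = 1"
  using uv_cong_1 u_less v_less p_gt_1 cong_less_modulus_unique_nat by auto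

lemma no_window_invariant:
  assumes "u * v = p + 1" "m \<in> window"
  shows "\<not> invariant_mon p b m"
proof
  obtain c d where m: "m = (c, d)" "0 < c" "c < u" "0 < d" "d < v"
    using assms(2) by (auto simp: window_def)
  assume "invariant_mon p b m"
  then have "[d = c * v] (mod p)"
    by (simp add: m invariant_mon_iff_cong_v)
  moreover have "c * v + v \<le> p + 1"
    using mult_le_mono1[of "c + 1" u v] m(3) assms(1) by simp
  then have "c * v < p"
    using m(4,5) by linarith
  ultimately have "d = c * v"
    using m(5) v_less cong_less_modulus_unique_nat by simp
  moreover have "v \<le> c * v"
    using m(2) by simp
  ultimately show False
    using m(5) by simp
qed

lemma two_p_less_uv:
  assumes "u \<noteq> 1" "u * v \<noteq> p + 1"
  shows "2 * p < u * v"
proof -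
  obtain q where q: "u * v = q * p + 1"
    using uv_cong_1 u_pos v_pos cong_le_nat[of 1 "u * v" p] by auto
  have "q \<noteq> 0"
  proof
    assume "q = 0"
    with q assms(1) show False
      by simp
  qed
  moreover have "q \<noteq> 1"
    using q assms(2) by simp
  ultimately have "2 * p \<le> q * p"
    by (simp add: mult_le_mono1)
  with q show ?thesis
    by linarith
qed

lemma window_invariant_exists:
  assumes "u \<noteq> 1" "u * v \<noteq> p + 1"
  shows "\<exists>m \<in> window. invariant_mon p b m"
proof -
  have "v \<noteq> 1"
    using assms(1) u_eq_1_iff_v_eq_1 by simp
  define q where "q = p div v"
  define r where "r = p mod v"
  have "r \<noteq> 0"
  proof
    assume "r = 0"
    then have "[u * v = 1] (mod v)"
      using uv_cong_1 cong_dvd_modulus_nat by (auto simp: r_def mod_eq_0_iff_dvd)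
    with \<open>v \<noteq> 1\<close> show False
      by (simp add: cong_def)
  qed
  have "r < v"
    using v_pos by (simp add: r_def)
  define c where "c = q + 1"
  define d where "d = v - r"
  have cv: "c * v = p + d"
    using \<open>r < v\<close> div_mult_mod_eq[of p v] by (simp add: c_def d_def q_def r_def)
  have "c * v < u * v"
    using cv two_p_less_uv[OF assms] v_less by (simp add: d_def)
  then have "c < u"
    by (simp add: mult_less_cancel2)
  then have "(c, d) \<in> window"
    using \<open>r \<noteq> 0\<close> \<open>r < v\<close> by (simp add: window_def c_def d_def)
  moreover have "[d = c * v] (mod p)"
    by (simp add: cv cong_def)
  ultimately show ?thesis
    using invariant_mon_iff_cong_v[of c d] by blast
qed

lemma card_corner_gens: "card corner_gens = (if u = 1 then 3 else 4)"
  using u_eq_1_iff_v_eq_1 u_pos v_pos u_less v_less by (auto simp: corner_gens_def)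

lemma inv_gens_eq_corner_gens:
  assumes "\<forall>m \<in> window. \<not> invariant_mon p b m"
  shows "inv_gens p b = corner_gens"
  using inv_gens_subset corner_gens_subset assms by (auto simp: inv_gens_def nonconst_inv_def)

lemma card_inv_gens_gt_4:
  assumes "u \<noteq> 1" "m \<in> window" "invariant_mon p b m"
  shows "4 < card (inv_gens p b)"
proof -
  have "nonconst_inv p b m"
    using assms(2,3) by (auto simp: nonconst_inv_def window_def)
  then obtain g where g: "g \<in> inv_gens p b" "mon_dvd g m"
    using ex_inv_gens_mon_dvd by blast
  have "\<not> mon_dvd g' m" if "g' \<in> corner_gens" for g'
    using that assms(2) u_less v_less by (auto simp: corner_gens_def window_def mon_dvd_def)
  with g(2) have "g \<notin> corner_gens"
    by blast
  then have "card (insert g corner_gens) = 5"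
    using card_corner_gens assms(1) by (simp add: corner_gens_def)
  moreover have "insert g corner_gens \<subseteq> inv_gens p b"
    using g(1) corner_gens_subset by simp
  then have "card (insert g corner_gens) \<le> card (inv_gens p b)"
    using finite_inv_gens p_gt_1 by (simp add: card_mono)
  ultimately show ?thesis
    by simp
qed

theorem card_inv_gens_eq_4_iff: "card (inv_gens p b) = 4 \<longleftrightarrow> u * v = p + 1"
proof (cases "u = 1")
  case True
  then have "window = {}"
    by (auto simp: window_def)
  then have "card (inv_gens p b) = 3"
    using inv_gens_eq_corner_gens card_corner_gens True by simp
  moreover have "u * v \<noteq> p + 1"
    using True u_eq_1_iff_v_eq_1 p_gt_1 by simp
  ultimately show ?thesis
    by simp
next
  case False
  show ?thesis
  proof (cases "u * v = p + 1")
    case True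
    then show ?thesis
      using inv_gens_eq_corner_gens no_window_invariant card_corner_gens False by simp
  next
    case uv: False
    then obtain m where "m \<in> window" "invariant_mon p b m"
      using window_invariant_exists False by blast
    then show ?thesis
      using card_inv_gens_gt_4 False uv by fastforce
  qed
qed

end

theorem theorem3p5:
  fixes p b binv :: nat
  assumes "prime p"
    and "0 < binv" and "binv < p" and "[b * binv = 1] (mod p)"
    and "0 < b" and "b \<le> binv"
  shows "card (inv_gens p b) = 4 \<longleftrightarrow>
         (int p - int b) * (int p - int binv) = int p + 1"
proof -
  \<comment> \<open>Primality only enters as 1 < p, and b \<le> binv only as b < p; the positivity
    hypotheses follow from the congruence.\<close>
  interpret cyclic_invariants p b binv
    using assms prime_gt_1_nat by unfold_locales simp_all
  have "(int p - int b) * (int p - int binv) = int (u * v)"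
    using assms(3,6) by (simp add: u_def v_def of_nat_diff)
  then have "(int p - int b) * (int p - int binv) = int p + 1 \<longleftrightarrow> u * v = p + 1"
    by linarith
  with card_inv_gens_eq_4_iff show ?thesis
    by simp
qed

end
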